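(* Fix a measurable $g:\mathcal X\to\mathbb R$ and a loss $\ell:\mathbb R\to\mathbb R_+$ with all second moments below finite, and assume $V:=\mathrm{Var}_{x\sim p}(\ell(-g(x)))>0$. Let $\mathcal D_{\mathrm c}=\{(x_{\mathrm c,i},r_i)\}_{i=1}^{n_{\mathrm c}}$ be i.i.d. from $q$ and $\mathcal D_{\mathrm u}=\{x_{\mathrm u,i}\}_{i=1}^{n_{\mathrm u}}$ be i.i.d. from $p$, independent of $\mathcal D_{\mathrm c}$. For $\beta\in[0,1]$ define the estimator $$\hat R_{\mathrm{SC},\ell}(g)=\frac1{n_{\mathrm c}}\sum_{i=1}^{n_{\mathrm c}}r_i\big(\ell(g(x_{\mathrm c,i}))-\ell(-g(x_{\mathrm c,i}))\big)+(1-\beta)\frac1{n_{\mathrm c}}\sum_{i=1}^{n_{\mathrm c}}\ell(-g(x_{\mathrm c,i}))+\beta\frac1{n_{\mathrm u}}\sum_{i=1}^{n_{\mathrm u}}\ell(-g(x_{\mathrm u,i})).$$ Let $\sigma_{\mathrm{cov}}$ be the covariance between $n_{\mathrm c}^{-1}\sum_{i=1}^{n_{\mathrm c}}r_i\{\ell(g(x_{\mathrm c,i}))-\ell(-g(x_{\mathrm c,i}))\}$ and $n_{\mathrm c}^{-1}\sum_{i=1}^{n_{\mathrm c}}\ell(-g(x_{\mathrm c,i}))$. Then, over $\beta\in[0,1]$, the variance of $\hat R_{\mathrm{SC},\ell}(g)$ is minimized at $$\beta=\mathrm{clip}_{[0,1]}\Big(\frac{n_{\mathrm u}}{n_{\mathrm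 c}+n_{\mathrm u}}+\frac{\sigma_{\mathrm{cov}}}{V}\cdot\frac{n_{\mathrm c}n_{\mathrm u}}{n_{\mathrm c}+n_{\mathrm u}}\Big),$$ where $\mathrm{clip}_{[l,u]}(v)=\max\{l,\min\{v,u\}\}$.
   Context: Let $\mathcal X$ be a measurable space. Let $p_{\mathrm{opt}}$ and $p_{\mathrm{non}}$ be probability densities on $\mathcal X$, $\alpha\in(0,1)$, $p=\alpha p_{\mathrm{opt}}+(1-\alpha)p_{\mathrm{non}}$. The confidence score is $r(x)=\alpha p_{\mathrm{opt}}(x)/p(x)\in[0,1]$. The distribution $q$ is the joint law of $(x,r)$ where $x\sim p$ and $r=r(x)$. *)

theory Defs
  imports "HOL-Probability.Probability"
begin

definition clip :: "real \<Rightarrow> real \<Rightarrow> real \<Rightarrow> real" where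
  "clip l u v = max l (min v u)"

definition covariance :: "'w measure \<Rightarrow> ('w \<Rightarrow> real) \<Rightarrow> ('w \<Rightarrow> real) \<Rightarrow> real" where
  "covariance M X Y =
     (\<integral>w. (X w - (\<integral>v. X v \<partial>M)) * (Y w - (\<integral>v. Y v \<partial>M)) \<partial>M)"

definition mix_density :: "real \<Rightarrow> ('a \<Rightarrow> real) \<Rightarrow> ('a \<Rightarrow> real) \<Rightarrow> 'a \<Rightarrow> real" where
  "mix_density \<alpha> p_opt p_non x = \<alpha> * p_opt x + (1 - \<alpha>) * p_non x"

definition conf_score :: "real \<Rightarrow> ('a \<Rightarrow> real) \<Rightarrow> ('a \<Rightarrow> real) \<Rightarrow> 'a \<Rightarrow> real" where
  "conf_score \<alpha> p_opt p_non x = \<alpha> * p_opt x / mix_density \<alpha> p_opt p_non x"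

definition mix_measure :: "'a measure \<Rightarrow> real \<Rightarrow> ('a \<Rightarrow> real) \<Rightarrow> ('a \<Rightarrow> real) \<Rightarrow> 'a measure" where
  "mix_measure \<mu> \<alpha> p_opt p_non = density \<mu> (\<lambda>x. ennreal (mix_density \<alpha> p_opt p_non x))"

text \<open>The SC estimator; D_c given by sample points xc i (i < nc) with confidences r(xc i),
  D_u by xu i (i < nu).\<close>
definition R_SC :: "(real \<Rightarrow> real) \<Rightarrow> ('a \<Rightarrow> real) \<Rightarrow> ('a \<Rightarrow> real) \<Rightarrow> real \<Rightarrow> nat \<Rightarrow> nat
     \<Rightarrow> (nat \<Rightarrow> 'a) \<Rightarrow> (nat \<Rightarrow> 'a) \<Rightarrow> real" where
  "R_SC loss g r \<beta> nc nu xc xu =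
     (\<Sum>i<nc. r (xc i) * (loss (g (xc i)) - loss (- g (xc i)))) / nc
     + (1 - \<beta>) * ((\<Sum>i<nc. loss (- g (xc i))) / nc)
     + \<beta> * ((\<Sum>i<nu. loss (- g (xu i))) / nu)"

end

theory Submission
  imports Defs
begin

text \<open>Write the estimator as a weighted sum of the independent terms
  a(x) = r(x) (l(g x) - l(-g x)) and b(x) = l(-g x), evaluated at the pooled sample.
  Independence removes all cross covariances, so
  Var R(beta) = (Var a + 2 (1 - beta) Cov(a,b) + (1 - beta)^2 Var b) / n_c + beta^2 Var b / n_u
  and sigma_cov = Cov(a,b) / n_c. This is a convex quadratic in beta whose vertex is the
  expression inside the clip, and on [0,1] a convex quadratic is smallest at the point
  closest to its vertex. Square integrability of a comes from 0 <= r <= 1.\<close>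

lemma integrable_mult_of_square_integrable:
  fixes u w :: "'a \<Rightarrow> real"
  assumes [measurable]: "u \<in> borel_measurable M" "w \<in> borel_measurable M"
    and "integrable M (\<lambda>x. (u x)\<^sup>2)" "integrable M (\<lambda>x. (w x)\<^sup>2)"
  shows "integrable M (\<lambda>x. u x * w x)"
proof (rule Bochner_Integration.integrable_bound[of _ "\<lambda>x. (u x)\<^sup>2 + (w x)\<^sup>2"])
  show "integrable M (\<lambda>x. (u x)\<^sup>2 + (w x)\<^sup>2)" using assms by auto
  show "AE x in M. norm (u x * w x) \<le> norm ((u x)\<^sup>2 + (w x)\<^sup>2)"
  proof (rule AE_I2)
    fix x
    have "0 \<le> (\<bar>u x\<bar> - \<bar>w x\<bar>)\<^sup>2" by simp
    then have "2 * \<bar>u x * w x\<bar> \<le> (u x)\<^sup>2 + (w x)\<^sup>2"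
      by (simp add: abs_mult power2_eq_square algebra_simps)
    then have "\<bar>u x * w x\<bar> \<le> (u x)\<^sup>2 + (w x)\<^sup>2"
      using abs_ge_zero[of "u x * w x"] by linarith
    then show "norm (u x * w x) \<le> norm ((u x)\<^sup>2 + (w x)\<^sup>2)" by simp
  qed
qed measurable

lemma square_integrable_lincomb:
  fixes u w :: "'a \<Rightarrow> real"
  assumes [measurable]: "u \<in> borel_measurable M" "w \<in> borel_measurable M"
    and "integrable M (\<lambda>x. (u x)\<^sup>2)" "integrable M (\<lambda>x. (w x)\<^sup>2)"
  shows "integrable M (\<lambda>x. (a * u x + b * w x)\<^sup>2)"
proof -
  have "integrable M (\<lambda>x. a\<^sup>2 * (u x)\<^sup>2 + 2 * a * b * (u x * w x) + b\<^sup>2 * (w x)\<^sup>2)"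
    using assms integrable_mult_of_square_integrable[OF assms] by auto
  then show ?thesis
    by (simp add: power2_eq_square algebra_simps)
qed

lemma (in finite_measure) square_integrable_diff_const:
  fixes u :: "'a \<Rightarrow> real"
  assumes [measurable]: "u \<in> borel_measurable M" and "integrable M (\<lambda>x. (u x)\<^sup>2)"
  shows "integrable M (\<lambda>x. (u x - c)\<^sup>2)"
proof -
  have "integrable M u" by (rule square_integrable_imp_integrable[OF _ assms(2)]) measurable
  then have "integrable M (\<lambda>x. (u x)\<^sup>2 - 2 * c * u x + c\<^sup>2)"
    using assms by auto
  then show ?thesis by (simp add: power2_diff algebra_simps)
qed

lemma (in prob_space) covariance_linear:
  fixes u w :: "'a \<Rightarrow> real"
  assumes [measurable]: "u \<in> borel_measurable M" "w \<in> borel_measurable M"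
    and "integrable M (\<lambda>x. (u x)\<^sup>2)" "integrable M (\<lambda>x. (w x)\<^sup>2)"
  shows "covariance M (\<lambda>x. a * u x + b * w x) (\<lambda>x. c * u x + d * w x)
     = a * c * covariance M u u + (a * d + b * c) * covariance M u w + b * d * covariance M w w"
proof -
  define u' where "u' x = u x - expectation u" for x
  define w' where "w' x = w x - expectation w" for x
  have [measurable]: "u' \<in> borel_measurable M" "w' \<in> borel_measurable M"
    by (simp_all add: u'_def[abs_def] w'_def[abs_def])
  have "integrable M (\<lambda>x. (u' x)\<^sup>2)" "integrable M (\<lambda>x. (w' x)\<^sup>2)"
    unfolding u'_def w'_def using assms by (simp_all add: square_integrable_diff_const)
  then have "integrable M (\<lambda>x. u' x * u' x)" "integrable M (\<lambda>x. u' x * w' x)"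
    "integrable M (\<lambda>x. w' x * w' x)"
    by (simp_all add: integrable_mult_of_square_integrable)
  moreover have "integrable M u" "integrable M w"
    using assms by (auto intro: square_integrable_imp_integrable)
  moreover have "(a * u x + b * w x - (a * expectation u + b * expectation w))
      * (c * u x + d * w x - (c * expectation u + d * expectation w))
    = a * c * (u' x * u' x) + (a * d + b * c) * (u' x * w' x) + b * d * (w' x * w' x)" for x
    by (simp add: u'_def w'_def algebra_simps)
  ultimately show ?thesis
    by (simp add: covariance_def u'_def w'_def)
qed

lemma (in prob_space) indep_var_compose_components:
  assumes ind: "indep_vars M' X I" and kl: "k \<in> I" "l \<in> I" "k \<noteq> l"
    and f: "f \<in> measurable (M' k) N1" and h: "h \<in> measurable (M' l) N2"
  shows "indep_var N1 (\<lambda>\<omega>. f (X k \<omega>)) N2 (\<lambda>\<omega>. h (X l \<omega>))"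
proof -
  have "indep_var (PiM {k} M') (\<lambda>\<omega>. restrict (\<lambda>i. X i \<omega>) {k})
                  (PiM {l} M') (\<lambda>\<omega>. restrict (\<lambda>i. X i \<omega>) {l})"
    by (rule indep_var_restrict[OF ind]) (use kl in auto)
  moreover have "(\<lambda>x. f (x k)) \<in> measurable (PiM {k} M') N1"
    using measurable_comp[OF measurable_component_singleton[of k "{k}" M'] f] by (simp add: comp_def)
  moreover have "(\<lambda>x. h (x l)) \<in> measurable (PiM {l} M') N2"
    using measurable_comp[OF measurable_component_singleton[of l "{l}" M'] h] by (simp add: comp_def)
  ultimately have "indep_var N1 ((\<lambda>x. f (x k)) \<circ> (\<lambda>\<omega>. restrict (\<lambda>i. X i \<omega>) {k}))
                           N2 ((\<lambda>x. h (x l)) \<circ> (\<lambda>\<omega>. restrict (\<lambda>i. X i \<omega>) {l}))"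
    by (rule indep_var_compose)
  then show ?thesis by (simp add: comp_def)
qed

lemma (in prob_space) covariance_indep_var_eq_0:
  fixes Y Z :: "'a \<Rightarrow> real"
  assumes "indep_var borel Y borel Z" "integrable M Y" "integrable M Z"
  shows "covariance M Y Z = 0"
proof -
  have "(Y \<omega> - expectation Y) * (Z \<omega> - expectation Z)
      = Y \<omega> * Z \<omega> - expectation Z * Y \<omega> - expectation Y * Z \<omega> + expectation Y * expectation Z"
    for \<omega> by (simp add: algebra_simps)
  then show ?thesis
    using assms indep_var_integrable[OF assms] indep_var_lebesgue_integral[OF assms]
    by (simp add: covariance_def prob_space)
qed

lemma covariance_distr:
  assumes [measurable]: "X \<in> measurable M N" "f \<in> borel_measurable N" "h \<in> borel_measurable N"
  shows "covariance (distr M N X) f h = covariance M (\<lambda>\<omega>. f (X \<omega>)) (\<lambda>\<omega>. h (X \<omega>))"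
  by (simp add: covariance_def integral_distr)

lemma (in prob_space) covariance_sum:
  fixes Y Z :: "'k \<Rightarrow> 'a \<Rightarrow> real"
  assumes "finite K" "finite L"
    and [measurable]: "\<And>k. k \<in> K \<Longrightarrow> Y k \<in> borel_measurable M"
      "\<And>l. l \<in> L \<Longrightarrow> Z l \<in> borel_measurable M"
    and Y2: "\<And>k. k \<in> K \<Longrightarrow> integrable M (\<lambda>\<omega>. (Y k \<omega>)\<^sup>2)"
    and Z2: "\<And>l. l \<in> L \<Longrightarrow> integrable M (\<lambda>\<omega>. (Z l \<omega>)\<^sup>2)"
  shows "covariance M (\<lambda>\<omega>. \<Sum>k\<in>K. Y k \<omega>) (\<lambda>\<omega>. \<Sum>l\<in>L. Z l \<omega>)
       = (\<Sum>k\<in>K. \<Sum>l\<in>L. covariance M (Y k) (Z l))"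
proof -
  define Y' where "Y' k \<omega> = Y k \<omega> - expectation (Y k)" for k \<omega>
  define Z' where "Z' l \<omega> = Z l \<omega> - expectation (Z l)" for l \<omega>
  have "integrable M (Y k)" if "k \<in> K" for k
    using Y2[OF that] that by (auto intro: square_integrable_imp_integrable)
  then have EY: "expectation (\<lambda>\<omega>. \<Sum>k\<in>K. Y k \<omega>) = (\<Sum>k\<in>K. expectation (Y k))"
    by (simp add: Bochner_Integration.integral_sum)
  have "integrable M (Z l)" if "l \<in> L" for l
    using Z2[OF that] that by (auto intro: square_integrable_imp_integrable)
  then have EZ: "expectation (\<lambda>\<omega>. \<Sum>l\<in>L. Z l \<omega>) = (\<Sum>l\<in>L. expectation (Z l))"
    by (simp add: Bochner_Integration.integral_sum)
  have YZ: "integrable M (\<lambda>\<omega>. Y' k \<omega> * Z' l \<omega>)" if "k \<in> K" "l \<in> L" for k l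
    using that Y2[OF that(1)] Z2[OF that(2)]
    by (auto simp: Y'_def Z'_def intro!: integrable_mult_of_square_integrable
        square_integrable_diff_const)
  have "((\<Sum>k\<in>K. Y k \<omega>) - (\<Sum>k\<in>K. expectation (Y k)))
      * ((\<Sum>l\<in>L. Z l \<omega>) - (\<Sum>l\<in>L. expectation (Z l)))
    = (\<Sum>k\<in>K. \<Sum>l\<in>L. Y' k \<omega> * Z' l \<omega>)" for \<omega>
    by (simp add: Y'_def Z'_def sum_subtractf[symmetric] sum_product)
  then have "covariance M (\<lambda>\<omega>. \<Sum>k\<in>K. Y k \<omega>) (\<lambda>\<omega>. \<Sum>l\<in>L. Z l \<omega>)
      = expectation (\<lambda>\<omega>. \<Sum>k\<in>K. \<Sum>l\<in>L. Y' k \<omega> * Z' l \<omega>)"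
    unfolding covariance_def EY EZ by simp
  also have "\<dots> = (\<Sum>k\<in>K. \<Sum>l\<in>L. expectation (\<lambda>\<omega>. Y' k \<omega> * Z' l \<omega>))"
    using YZ by (simp add: Bochner_Integration.integral_sum)
  also have "\<dots> = (\<Sum>k\<in>K. \<Sum>l\<in>L. covariance M (Y k) (Z l))"
    by (simp add: covariance_def Y'_def Z'_def)
  finally show ?thesis .
qed

lemma (in prob_space) covariance_sum_indep_vars:
  fixes X :: "'k \<Rightarrow> 'a \<Rightarrow> 'b" and \<phi> \<psi> :: "'k \<Rightarrow> 'b \<Rightarrow> real"
  assumes fin: "finite K" and ind: "indep_vars (\<lambda>_. N) X K"
    and law: "\<And>k. k \<in> K \<Longrightarrow> distr M N (X k) = P"
    and \<phi>: "\<And>k. k \<in> K \<Longrightarrow> \<phi> k \<in> borel_measurable N" "\<And>k. k \<in> K \<Longrightarrow> integrable P (\<lambda>x. (\<phi> k x)\<^sup>2)"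
    and \<psi>: "\<And>k. k \<in> K \<Longrightarrow> \<psi> k \<in> borel_measurable N" "\<And>k. k \<in> K \<Longrightarrow> integrable P (\<lambda>x. (\<psi> k x)\<^sup>2)"
  shows "covariance M (\<lambda>\<omega>. \<Sum>k\<in>K. \<phi> k (X k \<omega>)) (\<lambda>\<omega>. \<Sum>k\<in>K. \<psi> k (X k \<omega>))
       = (\<Sum>k\<in>K. covariance P (\<phi> k) (\<psi> k))"
proof -
  have X: "X k \<in> measurable M N" if "k \<in> K" for k
    using ind that unfolding indep_vars_def by auto
  have sq: "integrable M (\<lambda>\<omega>. (f (X k \<omega>))\<^sup>2)"
    if "k \<in> K" "f \<in> borel_measurable N" "integrable P (\<lambda>x. (f x)\<^sup>2)" for k and f :: "'b \<Rightarrow> real"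
    using that integrable_distr_eq[OF X[OF that(1)], of "\<lambda>x. (f x)\<^sup>2"] law[OF that(1)] by simp
  have int: "integrable M (\<lambda>\<omega>. f (X k \<omega>))"
    if "k \<in> K" "f \<in> borel_measurable N" "integrable P (\<lambda>x. (f x)\<^sup>2)" for k and f :: "'b \<Rightarrow> real"
    using sq[OF that] measurable_comp[OF X[OF that(1)] that(2)]
    by (auto intro: square_integrable_imp_integrable simp: comp_def)
  have "covariance M (\<lambda>\<omega>. \<phi> k (X k \<omega>)) (\<lambda>\<omega>. \<psi> l (X l \<omega>))
      = (if k = l then covariance P (\<phi> k) (\<psi> k) else 0)" if "k \<in> K" "l \<in> K" for k l
  proof (cases "k = l")
    case True
    then show ?thesis
      using covariance_distr[OF X[OF that(1)] \<phi>(1)[OF that(1)] \<psi>(1)[OF that(1)]] law[OF that(1)]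
      by simp
  next
    case False
    have "indep_var borel (\<lambda>\<omega>. \<phi> k (X k \<omega>)) borel (\<lambda>\<omega>. \<psi> l (X l \<omega>))"
      using indep_var_compose_components[OF ind that False \<phi>(1)[OF that(1)] \<psi>(1)[OF that(2)]] .
    then show ?thesis
      using covariance_indep_var_eq_0 int[OF that(1) \<phi>[OF that(1)]] int[OF that(2) \<psi>[OF that(2)]]
        False by simp
  qed
  moreover have "covariance M (\<lambda>\<omega>. \<Sum>k\<in>K. \<phi> k (X k \<omega>)) (\<lambda>\<omega>. \<Sum>k\<in>K. \<psi> k (X k \<omega>))
      = (\<Sum>k\<in>K. \<Sum>l\<in>K. covariance M (\<lambda>\<omega>. \<phi> k (X k \<omega>)) (\<lambda>\<omega>. \<psi> l (X l \<omega>)))"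
    by (rule covariance_sum[OF fin fin])
      (use X \<phi> \<psi> sq measurable_comp[OF X] in \<open>auto simp: comp_def\<close>)
  ultimately show ?thesis
    using fin by simp
qed

locale two_iid_samples = prob_space +
  fixes N P :: "'b measure" and xc xu :: "nat \<Rightarrow> 'a \<Rightarrow> 'b" and nc nu :: nat
  assumes indep: "indep_vars (\<lambda>_. N) (\<lambda>k. case k of Inl i \<Rightarrow> xc i | Inr j \<Rightarrow> xu j)
      ({..<nc} <+> {..<nu})"
    and xc_law: "\<And>i. i < nc \<Longrightarrow> distr M N (xc i) = P"
    and xu_law: "\<And>j. j < nu \<Longrightarrow> distr M N (xu j) = P"
begin

lemma covariance_two_sample_sums:
  fixes a b :: "'b \<Rightarrow> real"
  assumes a: "a \<in> borel_measurable N" "integrable P (\<lambda>x. (a x)\<^sup>2)"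
    and b: "b \<in> borel_measurable N" "integrable P (\<lambda>x. (b x)\<^sup>2)"
  shows "covariance M
      (\<lambda>\<omega>. (\<Sum>i<nc. s * a (xc i \<omega>) + t * b (xc i \<omega>)) + (\<Sum>j<nu. u * b (xu j \<omega>)))
      (\<lambda>\<omega>. (\<Sum>i<nc. s' * a (xc i \<omega>) + t' * b (xc i \<omega>)) + (\<Sum>j<nu. u' * b (xu j \<omega>)))
    = nc * (s * s' * covariance P a a + (s * t' + t * s') * covariance P a b
            + t * t' * covariance P b b)
      + nu * (u * u' * covariance P b b)"
proof -
  define X where "X k = (case k of Inl i \<Rightarrow> xc i | Inr j \<Rightarrow> xu j)" for k
  define K where "K = {..<nc} <+> {..<nu}"
  define \<phi> where "\<phi> s t u k x = (case k of Inl _ \<Rightarrow> s | Inr _ \<Rightarrow> 0) * a x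
      + (case k of Inl _ \<Rightarrow> t | Inr _ \<Rightarrow> u) * b x" for s t u :: real and k :: "nat + nat" and x
  have ind': "indep_vars (\<lambda>_. N) X K"
    using indep by (simp add: K_def X_def[abs_def])
  have law: "distr M N (X k) = P" if "k \<in> K" for k
    using that xc_law xu_law by (auto simp: K_def X_def)
  have P_meas: "a \<in> borel_measurable P" "b \<in> borel_measurable P" if "k \<in> K" for k
  proof -
    have "sets P = sets N" using law[OF that] by (metis sets_distr)
    then show "a \<in> borel_measurable P" "b \<in> borel_measurable P"
      using a b measurable_cong_sets[of P N borel borel] by simp_all
  qed
  have \<phi>: "\<phi> s t u k \<in> borel_measurable N" "integrable P (\<lambda>x. (\<phi> s t u k x)\<^sup>2)"
    if "k \<in> K" for s t u k
    using a b P_meas[OF that] unfolding \<phi>_def[abs_def]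
    by (simp_all add: square_integrable_lincomb)
  have cov_P: "covariance P (\<phi> s t u k) (\<phi> s' t' u' k)
      = (case k of Inl _ \<Rightarrow> s * s' * covariance P a a + (s * t' + t * s') * covariance P a b
                            + t * t' * covariance P b b
                 | Inr _ \<Rightarrow> u * u' * covariance P b b)" if "k \<in> K" for k
  proof -
    interpret P: prob_space P
      using prob_space_distr[of "X k" N] ind' that law[OF that] unfolding indep_vars_def
      by auto
    show ?thesis
      using a b P_meas[OF that] P.covariance_linear[of a b 0 u 0 u'] unfolding \<phi>_def[abs_def]
      by (cases k) (simp_all add: P.covariance_linear)
  qed
  have "covariance M
      (\<lambda>\<omega>. (\<Sum>i<nc. s * a (xc i \<omega>) + t * b (xc i \<omega>)) + (\<Sum>j<nu. u * b (xu j \<omega>)))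
      (\<lambda>\<omega>. (\<Sum>i<nc. s' * a (xc i \<omega>) + t' * b (xc i \<omega>)) + (\<Sum>j<nu. u' * b (xu j \<omega>)))
    = covariance M (\<lambda>\<omega>. \<Sum>k\<in>K. \<phi> s t u k (X k \<omega>)) (\<lambda>\<omega>. \<Sum>k\<in>K. \<phi> s' t' u' k (X k \<omega>))"
    by (simp add: K_def X_def \<phi>_def sum.Plus)
  also have "\<dots> = (\<Sum>k\<in>K. covariance P (\<phi> s t u k) (\<phi> s' t' u' k))"
    by (intro covariance_sum_indep_vars[OF _ ind' law \<phi> \<phi>]) (simp_all add: K_def)
  finally show ?thesis
    by (simp add: cov_P K_def sum.Plus)
qed

lemma covariance_two_sample_means:
  fixes a b :: "'b \<Rightarrow> real"
  assumes a: "a \<in> borel_measurable N" "integrable P (\<lambda>x. (a x)\<^sup>2)"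
    and b: "b \<in> borel_measurable N" "integrable P (\<lambda>x. (b x)\<^sup>2)"
  shows "covariance M (\<lambda>\<omega>. (\<Sum>i<nc. a (xc i \<omega>)) / nc) (\<lambda>\<omega>. (\<Sum>i<nc. b (xc i \<omega>)) / nc)
       = covariance P a b / nc"
  using covariance_two_sample_sums[OF a b, of "1 / nc" 0 0 0 "1 / nc" 0]
  by (simp add: sum_divide_distrib power2_eq_square)

lemma variance_two_sample_estimator:
  fixes a b :: "'b \<Rightarrow> real"
  assumes a: "a \<in> borel_measurable N" "integrable P (\<lambda>x. (a x)\<^sup>2)"
    and b: "b \<in> borel_measurable N" "integrable P (\<lambda>x. (b x)\<^sup>2)"
  shows "variance (\<lambda>\<omega>. (\<Sum>i<nc. a (xc i \<omega>)) / nc + (1 - \<beta>) * ((\<Sum>i<nc. b (xc i \<omega>)) / nc)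
                        + \<beta> * ((\<Sum>j<nu. b (xu j \<omega>)) / nu))
       = (covariance P a a + 2 * (1 - \<beta>) * covariance P a b + (1 - \<beta>)\<^sup>2 * covariance P b b) / nc
         + \<beta>\<^sup>2 * covariance P b b / nu"
proof -
  \<comment> \<open>No positivity of nc, nu is needed: for an empty sample both sides read x / 0 = 0.\<close>
  let ?R = "\<lambda>\<omega>. (\<Sum>i<nc. a (xc i \<omega>)) / nc + (1 - \<beta>) * ((\<Sum>i<nc. b (xc i \<omega>)) / nc)
             + \<beta> * ((\<Sum>j<nu. b (xu j \<omega>)) / nu)"
  have R: "?R = (\<lambda>\<omega>. (\<Sum>i<nc. 1 / nc * a (xc i \<omega>) + (1 - \<beta>) / nc * b (xc i \<omega>))
             + (\<Sum>j<nu. \<beta> / nu * b (xu j \<omega>)))"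
    by (simp add: fun_eq_iff sum.distrib sum_divide_distrib sum_distrib_left)
  have "variance ?R = covariance M ?R ?R"
    by (simp only: covariance_def power2_eq_square)
  also have "\<dots> = nc * (1 / nc * (1 / nc) * covariance P a a
        + (1 / nc * ((1 - \<beta>) / nc) + (1 - \<beta>) / nc * (1 / nc)) * covariance P a b
        + (1 - \<beta>) / nc * ((1 - \<beta>) / nc) * covariance P b b)
      + nu * (\<beta> / nu * (\<beta> / nu) * covariance P b b)"
    unfolding R by (rule covariance_two_sample_sums[OF a b])
  also have "\<dots> = (covariance P a a + 2 * (1 - \<beta>) * covariance P a b
        + (1 - \<beta>)\<^sup>2 * covariance P b b) / nc + \<beta>\<^sup>2 * covariance P b b / nu"
    by (cases "nc = 0"; cases "nu = 0") (simp_all add: field_simps power2_eq_square)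
  finally show ?thesis .
qed

end

lemma clip_dist_le:
  assumes "l \<le> x" "x \<le> u"
  shows "\<bar>clip l u m - m\<bar> \<le> \<bar>x - m\<bar>"
  using assms by (auto simp: clip_def)

lemma control_variate_weight_optimal:
  fixes Vaa Vab V na nb m :: real
  assumes "0 < V" "0 < na" "0 < nb" "0 \<le> \<beta>" "\<beta> \<le> 1"
    and m: "m = nb / (na + nb) + Vab / na / V * (na * nb / (na + nb))"
  shows "(Vaa + 2 * (1 - clip 0 1 m) * Vab + (1 - clip 0 1 m)\<^sup>2 * V) / na + (clip 0 1 m)\<^sup>2 * V / nb
       \<le> (Vaa + 2 * (1 - \<beta>) * Vab + (1 - \<beta>)\<^sup>2 * V) / na + \<beta>\<^sup>2 * V / nb"
proof -
  define c where "c = V / na + V / nb"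
  have "c > 0" using assms by (simp add: c_def add_pos_pos)
  have cm: "c * m = (Vab + V) / na"
  proof -
    define S where "S = na + nb"
    have "S > 0" "c = V * S / (na * nb)"
      using assms by (simp_all add: S_def c_def field_simps)
    then have "c * (nb / S) = V / na" "c * (Vab / na / V * (na * nb / S)) = Vab / na"
      using assms(1-3) by (simp_all add: field_simps)
    then show ?thesis
      unfolding m S_def[symmetric] distrib_left by (simp add: add_divide_distrib)
  qed
  have F: "(Vaa + 2 * (1 - x) * Vab + (1 - x)\<^sup>2 * V) / na + x\<^sup>2 * V / nb
      = (Vaa + 2 * Vab + V) / na - c * m\<^sup>2 + c * (x - m)\<^sup>2" for x
  proof -
    have "(Vaa + 2 * (1 - x) * Vab + (1 - x)\<^sup>2 * V) / na + x\<^sup>2 * V / nb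
        = (Vaa + 2 * Vab + V) / na - 2 * x * ((Vab + V) / na) + c * x\<^sup>2"
      using assms by (simp add: c_def field_simps power2_eq_square)
    then show ?thesis
      unfolding cm[symmetric] by (simp add: power2_eq_square algebra_simps)
  qed
  have "(clip 0 1 m - m)\<^sup>2 \<le> (\<beta> - m)\<^sup>2"
    using clip_dist_le[of 0 \<beta> 1 m] assms by (simp add: abs_le_square_iff)
  then show ?thesis
    unfolding F using \<open>c > 0\<close> by simp
qed

lemma square_integrable_bounded_mult_diff:
  fixes r u w :: "'a \<Rightarrow> real"
  assumes [measurable]: "r \<in> borel_measurable M" "u \<in> borel_measurable M" "w \<in> borel_measurable M"
    and r: "\<And>x. \<bar>r x\<bar> \<le> 1"
    and "integrable M (\<lambda>x. (u x)\<^sup>2)" "integrable M (\<lambda>x. (w x)\<^sup>2)"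
  shows "integrable M (\<lambda>x. (r x * (u x - w x))\<^sup>2)"
proof (rule Bochner_Integration.integrable_bound[of _ "\<lambda>x. 2 * ((u x)\<^sup>2 + (w x)\<^sup>2)"])
  show "integrable M (\<lambda>x. 2 * ((u x)\<^sup>2 + (w x)\<^sup>2))" using assms by auto
  show "AE x in M. norm ((r x * (u x - w x))\<^sup>2) \<le> norm (2 * ((u x)\<^sup>2 + (w x)\<^sup>2))"
  proof (rule AE_I2)
    fix x
    have "\<bar>r x * (u x - w x)\<bar> \<le> \<bar>u x - w x\<bar>"
      using r[of x] by (simp add: abs_mult mult_left_le_one_le)
    then have "(r x * (u x - w x))\<^sup>2 \<le> (u x - w x)\<^sup>2" by (simp add: abs_le_square_iff)
    also have "\<dots> \<le> 2 * ((u x)\<^sup>2 + (w x)\<^sup>2)"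
      using sum_squares_ge_zero[of "u x + w x" 0] by (simp add: power2_eq_square algebra_simps)
    finally show "norm ((r x * (u x - w x))\<^sup>2) \<le> norm (2 * ((u x)\<^sup>2 + (w x)\<^sup>2))" by simp
  qed
qed measurable

lemma conf_score_nonneg_le_1:
  assumes "0 \<le> \<alpha>" "\<alpha> \<le> 1" "0 \<le> p_opt x" "0 \<le> p_non x"
  shows "0 \<le> conf_score \<alpha> p_opt p_non x" "conf_score \<alpha> p_opt p_non x \<le> 1"
proof -
  have "0 \<le> \<alpha> * p_opt x" "0 \<le> (1 - \<alpha>) * p_non x" using assms by simp_all
  then show "0 \<le> conf_score \<alpha> p_opt p_non x" "conf_score \<alpha> p_opt p_non x \<le> 1"
    by (auto simp: conf_score_def mix_density_def divide_le_eq_1)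
qed

lemma borel_measurable_conf_score [measurable]:
  assumes [measurable]: "p_opt \<in> borel_measurable M" "p_non \<in> borel_measurable M"
  shows "conf_score \<alpha> p_opt p_non \<in> borel_measurable M"
  unfolding conf_score_def[abs_def] mix_density_def by measurable

lemma square_integrable_conf_score_mult_diff:
  fixes u w :: "'a \<Rightarrow> real"
  assumes "0 \<le> \<alpha>" "\<alpha> \<le> 1" "\<And>x. 0 \<le> p_opt x" "\<And>x. 0 \<le> p_non x"
    and "p_opt \<in> borel_measurable M" "p_non \<in> borel_measurable M"
    and "u \<in> borel_measurable M" "w \<in> borel_measurable M"
    and "integrable (mix_measure M \<alpha> p_opt p_non) (\<lambda>x. (u x)\<^sup>2)"
      "integrable (mix_measure M \<alpha> p_opt p_non) (\<lambda>x. (w x)\<^sup>2)"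
  shows "integrable (mix_measure M \<alpha> p_opt p_non)
           (\<lambda>x. (conf_score \<alpha> p_opt p_non x * (u x - w x))\<^sup>2)"
proof (rule square_integrable_bounded_mult_diff)
  show "\<bar>conf_score \<alpha> p_opt p_non x\<bar> \<le> 1" for x
    using conf_score_nonneg_le_1[of \<alpha> p_opt x p_non] assms by simp
  have "sets (mix_measure M \<alpha> p_opt p_non) = sets M"
    by (simp add: mix_measure_def)
  then show "conf_score \<alpha> p_opt p_non \<in> borel_measurable (mix_measure M \<alpha> p_opt p_non)"
    "u \<in> borel_measurable (mix_measure M \<alpha> p_opt p_non)"
    "w \<in> borel_measurable (mix_measure M \<alpha> p_opt p_non)"
    using assms measurable_cong_sets[of "mix_measure M \<alpha> p_opt p_non" M borel borel] by simp_all
qed (use assms in simp_all)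

theorem proposition1:
  fixes \<mu> :: "'a measure" and \<Omega> :: "'w measure"
    and p_opt p_non :: "'a \<Rightarrow> real" and \<alpha> :: real
    and g :: "'a \<Rightarrow> real" and loss :: "real \<Rightarrow> real"
    and nc nu :: nat
    and xc xu :: "nat \<Rightarrow> 'w \<Rightarrow> 'a"
  assumes alpha: "0 < \<alpha>" "\<alpha> < 1"
    and p_opt_meas: "p_opt \<in> borel_measurable \<mu>" and p_opt_nonneg: "\<And>x. 0 \<le> p_opt x"
    and p_opt_prob: "prob_space (density \<mu> (\<lambda>x. ennreal (p_opt x)))"
    and p_non_meas: "p_non \<in> borel_measurable \<mu>" and p_non_nonneg: "\<And>x. 0 \<le> p_non x"
    and p_non_prob: "prob_space (density \<mu> (\<lambda>x. ennreal (p_non x)))"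
    and g_meas: "g \<in> borel_measurable \<mu>"
    and loss_meas: "loss \<in> borel_measurable borel"
    and loss_nonneg: "\<And>t. 0 \<le> loss t"
    and mom_pos: "integrable (mix_measure \<mu> \<alpha> p_opt p_non) (\<lambda>x. (loss (g x))\<^sup>2)"
    and mom_neg: "integrable (mix_measure \<mu> \<alpha> p_opt p_non) (\<lambda>x. (loss (- g x))\<^sup>2)"
    and V_pos: "prob_space.variance (mix_measure \<mu> \<alpha> p_opt p_non) (\<lambda>x. loss (- g x)) > 0"
    and nc_pos: "0 < nc" and nu_pos: "0 < nu"
    and Omega: "prob_space \<Omega>"
    and indep: "prob_space.indep_vars \<Omega> (\<lambda>_. \<mu>)
                  (\<lambda>k. case k of Inl i \<Rightarrow> xc i | Inr j \<Rightarrow> xu j) ({..<nc} <+> {..<nu})"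
    and xc_law: "\<And>i. i < nc \<Longrightarrow> distr \<Omega> \<mu> (xc i) = mix_measure \<mu> \<alpha> p_opt p_non"
    and xu_law: "\<And>j. j < nu \<Longrightarrow> distr \<Omega> \<mu> (xu j) = mix_measure \<mu> \<alpha> p_opt p_non"
  shows "let P = mix_measure \<mu> \<alpha> p_opt p_non;
             r = conf_score \<alpha> p_opt p_non;
             V = prob_space.variance P (\<lambda>x. loss (- g x));
             \<sigma>cov = covariance \<Omega>
                     (\<lambda>\<omega>. (\<Sum>i<nc. r (xc i \<omega>) * (loss (g (xc i \<omega>)) - loss (- g (xc i \<omega>)))) / nc)
                     (\<lambda>\<omega>. (\<Sum>i<nc. loss (- g (xc i \<omega>))) / nc);
             \<beta>opt = clip 0 1 (real nu / (real nc + real nu)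
                       + \<sigma>cov / V * (real nc * real nu / (real nc + real nu)))
         in \<forall>\<beta>\<in>{0..1}.
              prob_space.variance \<Omega> (\<lambda>\<omega>. R_SC loss g r \<beta>opt nc nu (\<lambda>i. xc i \<omega>) (\<lambda>j. xu j \<omega>))
              \<le> prob_space.variance \<Omega> (\<lambda>\<omega>. R_SC loss g r \<beta> nc nu (\<lambda>i. xc i \<omega>) (\<lambda>j. xu j \<omega>))"
proof -
  define P where "P = mix_measure \<mu> \<alpha> p_opt p_non"
  define r where "r = conf_score \<alpha> p_opt p_non"
  define a where "a x = r x * (loss (g x) - loss (- g x))" for x
  define b where "b x = loss (- g x)" for x
  interpret \<Omega>: two_iid_samples \<Omega> \<mu> P xc xu nc nu
    using Omega indep xc_law xu_law
    by (simp add: two_iid_samples_def two_iid_samples_axioms_def P_def)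
  note [measurable] = p_opt_meas p_non_meas g_meas loss_meas
  have a_meas: "a \<in> borel_measurable \<mu>" and b_meas: "b \<in> borel_measurable \<mu>"
    unfolding a_def[abs_def] b_def[abs_def] r_def by measurable
  have a: "integrable P (\<lambda>x. (a x)\<^sup>2)"
    using square_integrable_conf_score_mult_diff[of \<alpha> p_opt p_non \<mu> "\<lambda>x. loss (g x)" "\<lambda>x. loss (- g x)"]
      alpha p_opt_nonneg p_non_nonneg mom_pos mom_neg
    by (simp add: a_def P_def r_def)
  have b: "integrable P (\<lambda>x. (b x)\<^sup>2)"
    using mom_neg by (simp add: b_def P_def)
  have cov: "covariance \<Omega> (\<lambda>\<omega>. (\<Sum>i<nc. a (xc i \<omega>)) / nc) (\<lambda>\<omega>. (\<Sum>i<nc. b (xc i \<omega>)) / nc)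
      = covariance P a b / nc"
    by (rule \<Omega>.covariance_two_sample_means[OF a_meas a b_meas b])
  have var: "\<Omega>.variance (\<lambda>\<omega>. R_SC loss g r \<beta> nc nu (\<lambda>i. xc i \<omega>) (\<lambda>j. xu j \<omega>))
      = (covariance P a a + 2 * (1 - \<beta>) * covariance P a b + (1 - \<beta>)\<^sup>2 * covariance P b b) / nc
        + \<beta>\<^sup>2 * covariance P b b / nu" for \<beta>
    unfolding R_SC_def a_def[symmetric] unfolding b_def[symmetric]
    by (rule \<Omega>.variance_two_sample_estimator[OF a_meas a b_meas b])
  have V: "prob_space.variance P b = covariance P b b"
    by (simp add: covariance_def power2_eq_square)
  have "covariance P b b > 0"
    using V_pos V by (simp add: P_def b_def[abs_def])
  then show ?thesis
    unfolding Let_def P_def[symmetric] r_def[symmetric] a_def[symmetric]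
    unfolding b_def[symmetric] cov var V
    using nc_pos nu_pos by (intro ballI control_variate_weight_optimal) auto
qed

end
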